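(* Suppose we have $n\ge3$ agents with additive, identical, normalized valuations, provided with a prediction of accuracy $\eta<1-\min\left\{\frac{1}{2(n-1+2a)},\frac{1-a^2}{4+(2n-3)a}\right\}$ for some given $a\in(0,1]$; that is, the allowed error between the prediction and the true valuation is $1-\eta>\min\left\{\frac{1}{2(n-1+2a)},\frac{1-a^2}{4+(2n-3)a}\right\}$. Then there is no online algorithm that guarantees an $a$-EFX allocation for all instances with error at most $1-\eta$, even when $T'=T=2n-1$ and the prediction and the true valuation are $3$-value functions.
   Context: Online fair division with predictions and identical valuations: agents $[n]$; goods $g_1,\dots,g_T$ arrive one per time step; all agents share a true additive normalized valuation $v$ ($v(g_t)\ge0$, $\sum_{t\in[T]}v(g_t)=1$, $v(S)=\sum_{g\in S}v(g)$), and before any arrival the algorithm receives a prediction $p=(p(g_1),\dots,p(g_{T'}))$ (an additive normalized valuation over $T'$ predicted goods) and the accuracy level. Error $\frac12\sum_{t=1}^{\max\{T,T'\}}|p(g_t)-v(g_t)|$ (missing entries set to $0$); accuracy $\eta$ means the error is at most $1-\eta$. At time $t$, $v(g_t)$ is revealed and $g_t$ must be irrevocably allocated. For $S\ne\emptyset$, $\bar S=S\setminus\{g\}$ with $g\in\arg\max_{g'\in S}v(S\setminus\{g'\})$, $\bar\emptyset=\emptyset$. An allocation is $a$-EFX if $v(A_i)\ge a\cdot v(\bar A_j)$ for all $i,j$. A function is $k$-value if it takes at most $k$ distinct values. *)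

theory Defs
  imports Complex_Main
begin

(* A valuation over goods g_1..g_m is represented as a list of length m:
   entry t (0-based) is the value of good g_(t+1). *)

definition normalized_val :: "real list \<Rightarrow> bool" where
  "normalized_val xs \<longleftrightarrow> (\<forall>x\<in>set xs. 0 \<le> x) \<and> sum_list xs = 1"

definition k_value :: "nat \<Rightarrow> real list \<Rightarrow> bool" where
  "k_value k xs \<longleftrightarrow> card (set xs) \<le> k"

definition val_at :: "real list \<Rightarrow> nat \<Rightarrow> real" where
  "val_at xs t = (if t < length xs then xs ! t else 0)"

definition pred_error :: "real list \<Rightarrow> real list \<Rightarrow> real" where
  "pred_error p v = (1/2) * (\<Sum>t<max (length v) (length p). \<bar>val_at p t - val_at v t\<bar>)"

definition bundle_val :: "real list \<Rightarrow> nat set \<Rightarrow> real" where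
  "bundle_val v S = (\<Sum>t\<in>S. val_at v t)"

definition bar_val :: "real list \<Rightarrow> nat set \<Rightarrow> real" where
  "bar_val v S = (if S = {} then 0 else Max ((\<lambda>g. bundle_val v (S - {g})) ` S))"

definition a_EFX :: "nat \<Rightarrow> real \<Rightarrow> real list \<Rightarrow> (nat \<Rightarrow> nat set) \<Rightarrow> bool" where
  "a_EFX n a v A \<longleftrightarrow> (\<forall>i<n. \<forall>j<n. bundle_val v (A i) \<ge> a * bar_val v (A j))"

(* A deterministic online algorithm: given the prediction p and the values
   v(g_1),...,v(g_t) revealed so far, it returns the agent receiving g_t.
   The induced allocation: *)
definition online_alloc :: "(real list \<Rightarrow> real list \<Rightarrow> nat) \<Rightarrow> real list \<Rightarrow> real list \<Rightarrow> nat \<Rightarrow> nat set" where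
  "online_alloc alg p v i = {t. t < length v \<and> alg p (take (Suc t) v) = i}"

end

theory Submission imports Defs begin

(*
  The adversary starts with n - 1 goods of value eps. If the algorithm does not give them to
  distinct agents, the adversary continues with eps_zero_big, where every later good except the
  last is worthless: one of the at least two agents without an eps-good also misses the last good
  and ends with value 0, while some agent holds two eps-goods.

  Otherwise exactly one agent E is still empty-handed, and the adversary follows the prediction
  eps_mid_big, which has a medium good of value m and a big last good of value b. If E receives the
  medium good, the owner of the big good holds a second good, while a different agent is worth at
  most 1 - b < a b. If an agent g other than E receives it, g holds two goods, while an agent
  owning neither the medium nor the big good is worth at most (2n - 3) eps < a m.

  The two valuations differ by (n - 2) eps + m, which can be made arbitrarily small, so of the
  accuracy hypothesis only 1 - eta > 0 is used.
*)

lemma val_at_map_upt: "val_at (map f [0..<L]) t = (if t < L then f t else 0)"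
  by (simp add: val_at_def)

lemma val_at_nonneg: "normalized_val v \<Longrightarrow> 0 \<le> val_at v t"
  by (auto simp: normalized_val_def val_at_def)

lemma normalized_val_map_upt:
  assumes "\<And>t. t < L \<Longrightarrow> 0 \<le> f t" "(\<Sum>t<L. f t) = 1"
  shows "normalized_val (map f [0..<L])"
  using assms unfolding normalized_val_def
  by (auto simp: interv_sum_list_conv_sum_set_nat atLeast0LessThan)

lemma k_value_3_if_subset:
  "set xs \<subseteq> {x, y, z} \<Longrightarrow> k_value 3 xs"
  unfolding k_value_def
  by (rule order_trans[OF card_mono]) (auto simp: card_insert_if)

lemma pred_error_self: "pred_error v v = 0"
  by (simp add: pred_error_def)

lemma sum_if_less_const_else_zero:
  "(\<Sum>t<L. if t < k then c else 0) = real (min L k) * (c :: real)"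
  by (induction L) (auto simp: algebra_simps min_def)

lemma sum_if_less_zero_else_const:
  "(\<Sum>t<L. if t < k then 0 else c) = real (L - k) * (c :: real)"
  by (induction L) (auto simp: Suc_diff_le algebra_simps)

lemma bundle_val_all: "normalized_val v \<Longrightarrow> bundle_val v {..<length v} = 1"
  by (simp add: normalized_val_def bundle_val_def val_at_def sum_list_sum_nth atLeast0LessThan)

lemma bundle_val_le_complement:
  assumes "normalized_val v" "B \<subseteq> {..<length v}" "S \<subseteq> {..<length v} - B"
  shows "bundle_val v S \<le> 1 - bundle_val v B"
proof -
  have "bundle_val v S \<le> bundle_val v ({..<length v} - B)"
    unfolding bundle_val_def using assms by (intro sum_mono2) (auto simp: val_at_nonneg)
  also have "\<dots> = bundle_val v {..<length v} - bundle_val v B"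
    unfolding bundle_val_def using assms(2) by (simp add: sum_diff finite_subset)
  finally show ?thesis using bundle_val_all[OF assms(1)] by simp
qed

lemma val_le_bar_val:
  assumes "finite S" "c \<in> S" "s \<in> S" "s \<noteq> c" "\<And>t. 0 \<le> val_at v t"
  shows "val_at v c \<le> bar_val v S"
proof -
  have "val_at v c \<le> bundle_val v (S - {s})"
    unfolding bundle_val_def using assms by (intro member_le_sum) auto
  also have "\<dots> \<le> Max ((\<lambda>g. bundle_val v (S - {g})) ` S)"
    using assms by (intro Max_ge) auto
  finally show ?thesis using assms by (auto simp: bar_val_def)
qed

lemma not_a_EFX_if_bundle_below_shared_good:
  assumes "i < n" "j < n" "c \<in> A j" "s \<in> A j" "s \<noteq> c" "finite (A j)"
    "\<And>t. 0 \<le> val_at v t" "0 \<le> a" "bundle_val v (A i) < a * val_at v c"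
  shows "\<not> a_EFX n a v A"
proof -
  have "a * val_at v c \<le> a * bar_val v (A j)"
    using assms by (intro mult_left_mono val_le_bar_val) auto
  then show ?thesis using assms unfolding a_EFX_def by force
qed

lemma not_a_EFX_if_bundle_avoids:
  assumes "normalized_val v" "0 \<le> a" "i < n" "j < n" "c \<in> A j" "s \<in> A j" "s \<noteq> c"
    "finite (A j)" "B \<subseteq> {..<length v}" "A i \<subseteq> {..<length v} - B"
    "1 - bundle_val v B < a * val_at v c"
  shows "\<not> a_EFX n a v A"
proof (rule not_a_EFX_if_bundle_below_shared_good[where A = A, OF assms(3-8)])
  show "bundle_val v (A i) < a * val_at v c"
    using bundle_val_le_complement[OF assms(1,9,10)] assms(11) by simp
qed (use assms(1,2) in \<open>auto simp: val_at_nonneg\<close>)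

lemma not_a_EFX_if_two_large_goods_not_alone:
  fixes A :: "nat \<Rightarrow> nat set"
  assumes "normalized_val v" "0 \<le> a" "3 \<le> n"
    and bundles: "\<And>x. A x \<subseteq> {..<length v}"
    and goods: "mid \<noteq> big" "mid < length v" "big < length v"
    and owners: "g < n" "h < n" "mid \<in> A g" "big \<in> A h"
      "\<And>x. mid \<in> A x \<Longrightarrow> x = g" "\<And>x. big \<in> A x \<Longrightarrow> x = h"
    and others_own: "\<And>x. x < n \<Longrightarrow> x \<noteq> E \<Longrightarrow> \<exists>s\<in>A x. s \<noteq> mid \<and> s \<noteq> big"
    and big_large: "1 - val_at v big < a * val_at v big"
    and mid_large: "1 - val_at v mid - val_at v big < a * val_at v mid"
  shows "\<not> a_EFX n a v A"
proof -
  have avoids: "\<not> a_EFX n a v A"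
    if "x < n" "y < n" "c \<in> A y" "s \<in> A y" "s \<noteq> c" "B \<subseteq> {..<length v}" "A x \<inter> B = {}"
       "1 - bundle_val v B < a * val_at v c" for x y c s B
  proof (rule not_a_EFX_if_bundle_avoids[where A = A, OF assms(1,2) that(1-5) _ that(6) _ that(8)])
    show "finite (A y)" using bundles[of y] by (rule finite_subset) simp
    show "A x \<subseteq> {..<length v} - B" using bundles[of x] that(7) by blast
  qed
  have big_bundle: "bundle_val v {big} = val_at v big"
    and mid_big_bundle: "bundle_val v {mid, big} = val_at v mid + val_at v big"
    using goods(1) by (simp_all add: bundle_val_def)
  show ?thesis
  proof (cases "g = E")
    case True
    have "\<exists>s\<in>A h. s \<noteq> big"
    proof (cases "h = E")
      case True
      then show ?thesis using owners(3) \<open>g = E\<close> goods(1) by auto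
    next
      case False
      then show ?thesis using others_own[OF \<open>h < n\<close>] by blast
    qed
    then obtain s where "s \<in> A h" "s \<noteq> big" by blast
    define x where "x = (if h = 0 then 1 else 0 :: nat)"
    have "x < n" "A x \<inter> {big} = {}" using assms(3) owners(6) by (auto simp: x_def)
    moreover have "{big} \<subseteq> {..<length v}" using goods(3) by simp
    ultimately show ?thesis
      using avoids[OF _ owners(2,4) \<open>s \<in> A h\<close> \<open>s \<noteq> big\<close>, of x "{big}"] big_large big_bundle
      by simp
  next
    case False
    then obtain s where "s \<in> A g" "s \<noteq> mid" using others_own[OF \<open>g < n\<close>] by blast
    have "\<exists>x\<in>{0, 1, 2 :: nat}. x \<noteq> g \<and> x \<noteq> h" by auto
    then obtain x where x: "x \<in> {0, 1, 2}" "x \<noteq> g" "x \<noteq> h" by blast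
    then have "x < n" using assms(3) by auto
    moreover have "A x \<inter> {mid, big} = {}" using owners(5,6) x(2,3) by blast
    moreover have "{mid, big} \<subseteq> {..<length v}" using goods(2,3) by simp
    ultimately show ?thesis
      using avoids[OF _ owners(1,3) \<open>s \<in> A g\<close> \<open>s \<noteq> mid\<close>, of x "{mid, big}"] mid_large mid_big_bundle
      by simp
  qed
qed

lemma mem_online_alloc:
  "t \<in> online_alloc alg p v i \<longleftrightarrow> t < length v \<and> alg p (take (Suc t) v) = i"
  by (simp add: online_alloc_def)

lemma online_alloc_subset: "online_alloc alg p v i \<subseteq> {..<length v}"
  by (auto simp: online_alloc_def)

lemma finite_online_alloc: "finite (online_alloc alg p v i)"
  by (rule finite_subset[OF online_alloc_subset]) simp

lemma agent_outside_image_if_not_inj: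
  fixes F :: "nat \<Rightarrow> nat"
  assumes "F ` {..<k} \<subseteq> {..<n}" "\<not> inj_on F {..<k}" "k < n"
  obtains e where "e < n" "e \<notin> F ` {..<k}" "e \<noteq> h"
proof -
  have "card (F ` {..<k}) \<noteq> k"
    using assms(2) by (metis card_lessThan finite_lessThan inj_on_iff_eq_card)
  then have "card (F ` {..<k}) < k"
    using card_image_le[of "{..<k}" F] by simp
  then have "card {h} < card ({..<n} - F ` {..<k})"
    using assms(1,3) by (simp add: card_Diff_subset)
  then have "\<not> {..<n} - F ` {..<k} \<subseteq> {h}"
    by (metis card_mono finite.emptyI finite.insertI not_le)
  then show ?thesis using that by auto
qed

lemma all_agents_but_one_in_image_if_inj:
  fixes F :: "nat \<Rightarrow> nat"
  assumes "F ` {..<k} \<subseteq> {..<n}" "inj_on F {..<k}" "n = Suc k"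
  obtains E where "\<And>x. x < n \<Longrightarrow> x \<noteq> E \<Longrightarrow> x \<in> F ` {..<k}"
proof -
  have "card ({..<n} - F ` {..<k}) = 1"
    using assms by (simp add: card_Diff_subset card_image)
  then obtain E where "{..<n} - F ` {..<k} = {E}" by (rule card_1_singletonE)
  then show ?thesis using that by blast
qed

definition eps_mid_big :: "nat \<Rightarrow> real \<Rightarrow> real \<Rightarrow> real list" where
  "eps_mid_big n \<epsilon> m =
     map (\<lambda>t. if t = n then m else if t = 2*n - 2 then 1 - real (2*n - 3) * \<epsilon> - m else \<epsilon>)
       [0..<2*n - 1]"

definition eps_zero_big :: "nat \<Rightarrow> real \<Rightarrow> real list" where
  "eps_zero_big n \<epsilon> =
     map (\<lambda>t. if t < n - 1 then \<epsilon> else if t = 2*n - 2 then 1 - real (n - 1) * \<epsilon> else 0)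
       [0..<2*n - 1]"

lemma length_eps_mid_big [simp]: "length (eps_mid_big n \<epsilon> m) = 2*n - 1"
  by (simp add: eps_mid_big_def)

lemma length_eps_zero_big [simp]: "length (eps_zero_big n \<epsilon>) = 2*n - 1"
  by (simp add: eps_zero_big_def)

lemma val_at_eps_mid_big:
  "val_at (eps_mid_big n \<epsilon> m) t =
     (if t < 2*n - 1 then if t = n then m else if t = 2*n - 2 then 1 - real (2*n - 3) * \<epsilon> - m else \<epsilon>
      else 0)"
  by (simp add: eps_mid_big_def val_at_map_upt)

lemma val_at_eps_zero_big:
  "val_at (eps_zero_big n \<epsilon>) t =
     (if t < 2*n - 1 then if t < n - 1 then \<epsilon> else if t = 2*n - 2 then 1 - real (n - 1) * \<epsilon> else 0
      else 0)"
  by (simp add: eps_zero_big_def val_at_map_upt)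

lemma k_value_eps_mid_big: "k_value 3 (eps_mid_big n \<epsilon> m)"
  by (rule k_value_3_if_subset[of _ \<epsilon> m "1 - real (2*n - 3) * \<epsilon> - m"]) (auto simp: eps_mid_big_def)

lemma k_value_eps_zero_big: "k_value 3 (eps_zero_big n \<epsilon>)"
  by (rule k_value_3_if_subset[of _ \<epsilon> "1 - real (n - 1) * \<epsilon>" 0]) (auto simp: eps_zero_big_def)

lemma normalized_eps_zero_big:
  assumes "1 \<le> n" "0 \<le> \<epsilon>" "real (n - 1) * \<epsilon> \<le> 1"
  shows "normalized_val (eps_zero_big n \<epsilon>)"
proof -
  have "(\<Sum>t<2*n - 1. if t < n - 1 then \<epsilon> else if t = 2*n - 2 then 1 - real (n - 1) * \<epsilon> else 0)
      = (\<Sum>t<2*n - 1. (if t < n - 1 then \<epsilon> else 0) + (if t = 2*n - 2 then 1 - real (n - 1) * \<epsilon> else 0))"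
    by (intro sum.cong) auto
  also have "\<dots> = 1"
    using assms(1) by (simp add: sum.distrib sum_if_less_const_else_zero min_def) arith
  finally show ?thesis
    unfolding eps_zero_big_def using assms by (intro normalized_val_map_upt) auto
qed

lemma normalized_eps_mid_big:
  assumes "3 \<le> n" "0 \<le> \<epsilon>" "0 \<le> m" "real (2*n - 3) * \<epsilon> + m \<le> 1"
  shows "normalized_val (eps_mid_big n \<epsilon> m)"
proof -
  let ?b = "1 - real (2*n - 3) * \<epsilon> - m"
  have "(\<Sum>t<2*n - 1. if t = n then m else if t = 2*n - 2 then ?b else \<epsilon>)
      = (\<Sum>t<2*n - 1. \<epsilon> + (if t = n then m - \<epsilon> else 0) + (if t = 2*n - 2 then ?b - \<epsilon> else 0))"
    using assms(1) by (intro sum.cong) auto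
  also have "\<dots> = real (2*n - 1) * \<epsilon> + (m - \<epsilon>) + (?b - \<epsilon>)"
    using assms(1) by (simp add: sum.distrib) linarith
  also have "\<dots> = 1"
    using assms(1) by (simp add: algebra_simps)
  finally show ?thesis
    unfolding eps_mid_big_def using assms by (intro normalized_val_map_upt) auto
qed

lemma pred_error_eps_mid_big_eps_zero_big:
  assumes "3 \<le> n" "0 \<le> \<epsilon>" "0 \<le> m"
  shows "pred_error (eps_mid_big n \<epsilon> m) (eps_zero_big n \<epsilon>) = real (n - 2) * \<epsilon> + m"
proof -
  have "(\<Sum>t<2*n - 1. \<bar>val_at (eps_mid_big n \<epsilon> m) t - val_at (eps_zero_big n \<epsilon>) t\<bar>)
      = (\<Sum>t<2*n - 1. (if t < n - 1 then 0 else \<epsilon>) + (if t = n then m - \<epsilon> else 0)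
                       + (if t = 2*n - 2 then real (n - 2) * \<epsilon> + m - \<epsilon> else 0))"
  proof (intro sum.cong refl)
    fix t assume "t \<in> {..<2*n - 1}"
    moreover have "0 \<le> (real n - 2) * \<epsilon>" using assms by simp
    ultimately show "\<bar>val_at (eps_mid_big n \<epsilon> m) t - val_at (eps_zero_big n \<epsilon>) t\<bar>
      = (if t < n - 1 then 0 else \<epsilon>) + (if t = n then m - \<epsilon> else 0)
        + (if t = 2*n - 2 then real (n - 2) * \<epsilon> + m - \<epsilon> else 0)"
      using assms by (auto simp: val_at_eps_mid_big val_at_eps_zero_big of_nat_diff algebra_simps)
  qed
  also have "\<dots> = real n * \<epsilon> + (m - \<epsilon>) + (real (n - 2) * \<epsilon> + m - \<epsilon>)"
    using assms(1) by (simp add: sum.distrib sum_if_less_zero_else_const) arith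
  finally show ?thesis
    using assms(1) by (simp add: pred_error_def of_nat_diff algebra_simps)
qed

lemma take_eps_zero_big_eq_take_eps_mid_big:
  assumes "t < n - 1"
  shows "take (Suc t) (eps_zero_big n \<epsilon>) = take (Suc t) (eps_mid_big n \<epsilon> m)"
proof -
  have "Suc t \<le> 2*n - 1" using assms by simp
  then show ?thesis
    using assms unfolding eps_zero_big_def eps_mid_big_def
    by (auto simp: take_map take_upt)
qed

lemma online_alloc_eps_zero_big_not_a_EFX:
  assumes alg: "\<And>h. alg p h < n" and "0 < a" "0 < \<epsilon>" "real (n - 1) * \<epsilon> \<le> 1"
    and not_inj: "\<not> inj_on (\<lambda>t. alg p (take (Suc t) (eps_zero_big n \<epsilon>))) {..<n - 1}"
  shows "\<not> a_EFX n a (eps_zero_big n \<epsilon>) (online_alloc alg p (eps_zero_big n \<epsilon>))"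
proof -
  define V where "V = eps_zero_big n \<epsilon>"
  define A where "A = online_alloc alg p V"
  define F where "F t = alg p (take (Suc t) V)" for t
  have mem_A: "t \<in> A x \<longleftrightarrow> t < 2*n - 1 \<and> F t = x" for t x
    by (simp add: A_def F_def V_def mem_online_alloc)
  have "0 < n" using alg[of "[]"] by simp
  then have V_nonneg: "0 \<le> val_at V t" for t
    using assms by (intro val_at_nonneg) (simp add: V_def normalized_eps_zero_big)
  obtain i j where ij: "i < n - 1" "j < n - 1" "i \<noteq> j" "F i = F j"
    using not_inj unfolding F_def V_def inj_on_def by auto
  obtain e where e: "e < n" "e \<notin> F ` {..<n - 1}" "e \<noteq> F (2*n - 2)"
    using agent_outside_image_if_not_inj[of F "n - 1" n] not_inj \<open>0 < n\<close> alg
    unfolding F_def V_def by auto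
  have "bundle_val V (A e) = 0"
    unfolding bundle_val_def
  proof (intro sum.neutral ballI)
    fix t assume "t \<in> A e"
    then have "t < 2*n - 1" "\<not> t < n - 1" "t \<noteq> 2*n - 2"
      using e by (auto simp: mem_A)
    then show "val_at V t = 0" by (simp add: V_def val_at_eps_zero_big)
  qed
  moreover have "val_at V i = \<epsilon>" using ij(1) by (simp add: V_def val_at_eps_zero_big) arith
  ultimately have "bundle_val V (A e) < a * val_at V i" using assms by simp
  moreover have "i \<in> A (F i)" "j \<in> A (F i)" using ij by (auto simp: mem_A)
  ultimately have "\<not> a_EFX n a V A"
    using e(1) alg ij(3) V_nonneg \<open>0 < a\<close>
    by (intro not_a_EFX_if_bundle_below_shared_good[where c = i and s = j])
       (auto simp: A_def F_def finite_online_alloc)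
  then show ?thesis by (simp add: A_def V_def)
qed

lemma online_alloc_eps_mid_big_not_a_EFX:
  assumes "3 \<le> n" and alg: "\<And>h. alg p h < n" and "0 < a" "0 < \<epsilon>" "0 < m"
    and mid: "real (2*n - 3) * \<epsilon> < a * m"
    and big: "real (2*n - 3) * \<epsilon> + m < a * (1 - real (2*n - 3) * \<epsilon> - m)"
    and inj: "inj_on (\<lambda>t. alg p (take (Suc t) (eps_mid_big n \<epsilon> m))) {..<n - 1}"
  shows "\<not> a_EFX n a (eps_mid_big n \<epsilon> m) (online_alloc alg p (eps_mid_big n \<epsilon> m))"
proof -
  define V where "V = eps_mid_big n \<epsilon> m"
  define A where "A = online_alloc alg p V"
  define F where "F t = alg p (take (Suc t) V)" for t
  define b where "b = 1 - real (2*n - 3) * \<epsilon> - m"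
  have mem_A: "t \<in> A x \<longleftrightarrow> t < 2*n - 1 \<and> F t = x" for t x
    by (simp add: A_def F_def V_def mem_online_alloc)
  have "0 < a * b"
    using big \<open>0 < m\<close> mult_nonneg_nonneg[of "real (2*n - 3)" \<epsilon>] \<open>0 < \<epsilon>\<close>
    unfolding b_def by linarith
  then have "0 < b" using \<open>0 < a\<close> zero_less_mult_pos by blast
  then have V_norm: "normalized_val V"
    using assms by (simp add: V_def b_def normalized_eps_mid_big)
  have goods: "n \<noteq> 2*n - 2" "n < 2*n - 1" "2*n - 2 < 2*n - 1" using \<open>3 \<le> n\<close> by auto
  have "val_at V n = m" "val_at V (2*n - 2) = b"
    using goods by (simp_all add: V_def b_def val_at_eps_mid_big)
  then have large: "1 - val_at V (2*n - 2) < a * val_at V (2*n - 2)"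
      "1 - val_at V n - val_at V (2*n - 2) < a * val_at V n"
    using mid big by (simp_all add: b_def)
  have img: "F ` {..<n - 1} \<subseteq> {..<n}" using alg by (auto simp: F_def)
  have inj_F: "inj_on F {..<n - 1}" using inj by (simp add: F_def[abs_def] V_def)
  have "n = Suc (n - 1)" using \<open>3 \<le> n\<close> by simp
  then obtain E where E: "\<And>x. x < n \<Longrightarrow> x \<noteq> E \<Longrightarrow> x \<in> F ` {..<n - 1}"
    using all_agents_but_one_in_image_if_inj[OF img inj_F] by blast
  have others_own: "\<exists>s\<in>A x. s \<noteq> n \<and> s \<noteq> 2*n - 2" if x: "x < n" "x \<noteq> E" for x
  proof -
    obtain s where "s < n - 1" "F s = x" using E[OF x] by blast
    then have "s \<in> A x" "s \<noteq> n" "s \<noteq> 2*n - 2" using \<open>3 \<le> n\<close> by (auto simp: mem_A)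
    then show ?thesis by blast
  qed
  have bundles: "A x \<subseteq> {..<length V}" for x by (simp add: A_def online_alloc_subset)
  have in_range: "n < length V" "2*n - 2 < length V" using goods by (simp_all add: V_def)
  have owners: "F n < n" "F (2*n - 2) < n" "n \<in> A (F n)" "2*n - 2 \<in> A (F (2*n - 2))"
    using alg goods by (simp_all add: F_def mem_A)
  have unique: "\<And>x. n \<in> A x \<Longrightarrow> x = F n" "\<And>x. 2*n - 2 \<in> A x \<Longrightarrow> x = F (2*n - 2)"
    by (simp_all add: mem_A)
  have "\<not> a_EFX n a V A"
    using not_a_EFX_if_two_large_goods_not_alone[OF V_norm _ \<open>3 \<le> n\<close> bundles goods(1) in_range
        owners unique others_own large] \<open>0 < a\<close>
    by simp
  then show ?thesis by (simp add: A_def V_def)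
qed

lemma small_parameters_exist:
  assumes "3 \<le> n" "0 < a" "a \<le> 1" "0 < r"
  obtains \<epsilon> m :: real where "0 < \<epsilon>" "0 < m"
    "real (2*n - 3) * \<epsilon> < a * m"
    "real (2*n - 3) * \<epsilon> + m < a * (1 - real (2*n - 3) * \<epsilon> - m)"
    "real (2*n - 3) * \<epsilon> + m \<le> min r 1"
proof -
  define m where "m = min r (a/4) / 2"
  define \<epsilon> where "\<epsilon> = a * m / (2 * real n)"
  define s where "s = real (2*n - 3) * \<epsilon>"
  have "0 < m" using assms by (simp add: m_def)
  then have "0 < \<epsilon>" using assms by (simp add: \<epsilon>_def)
  have "real (2*n - 3) < 2 * real n" using assms(1) by (simp add: of_nat_diff)
  then have "s < 2 * real n * \<epsilon>" unfolding s_def using \<open>0 < \<epsilon>\<close> by simp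
  also have "\<dots> = a * m" using assms(1) by (simp add: \<epsilon>_def)
  finally have mid: "s < a * m" .
  have "a * m \<le> m" using assms \<open>0 < m\<close> by (simp add: mult_left_le_one_le)
  then have small: "s + m < 2 * m" using mid by linarith
  have "2 * m \<le> a / 4" "2 * m \<le> r" by (simp_all add: m_def)
  have "a * (a / 4) \<le> a * (1 / 4)" using assms(2,3) by simp
  moreover have "a * (1 - a / 4) \<le> a * (1 - s - m)"
    using small \<open>2 * m \<le> a / 4\<close> assms(2) by (intro mult_left_mono) auto
  moreover have "a * (1 - a / 4) = a - a * (a / 4)" by (simp add: algebra_simps)
  ultimately have "s + m < a * (1 - s - m)"
    using small \<open>2 * m \<le> a / 4\<close> assms(2) by linarith
  then show ?thesis
    using that[of \<epsilon> m] \<open>0 < \<epsilon>\<close> \<open>0 < m\<close> mid small \<open>2 * m \<le> a / 4\<close> \<open>2 * m \<le> r\<close> assms(3)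
    unfolding s_def by simp
qed

lemma online_a_EFX_impossible:
  assumes "3 \<le> n" "0 < a" "a \<le> 1" "0 < r" and alg: "\<And>p h. alg p h < n"
  shows "\<exists>p v. length p = 2 * n - 1 \<and> length v = 2 * n - 1 \<and>
           normalized_val p \<and> normalized_val v \<and> k_value 3 p \<and> k_value 3 v \<and>
           pred_error p v \<le> r \<and> \<not> a_EFX n a v (online_alloc alg p v)"
proof -
  obtain \<epsilon> m where "0 < \<epsilon>" "0 < m" and mid: "real (2*n - 3) * \<epsilon> < a * m"
    and big: "real (2*n - 3) * \<epsilon> + m < a * (1 - real (2*n - 3) * \<epsilon> - m)"
    and total: "real (2*n - 3) * \<epsilon> + m \<le> min r 1"
    using small_parameters_exist[OF assms(1-4)] by blast
  define P where "P = eps_mid_big n \<epsilon> m"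
  define Z where "Z = eps_zero_big n \<epsilon>"
  have "real (n - 1) * \<epsilon> \<le> real (2*n - 3) * \<epsilon>" "real (n - 2) * \<epsilon> \<le> real (2*n - 3) * \<epsilon>"
    using \<open>3 \<le> n\<close> \<open>0 < \<epsilon>\<close> by (simp_all add: mult_right_mono)
  moreover have "pred_error P Z = real (n - 2) * \<epsilon> + m"
    using \<open>3 \<le> n\<close> \<open>0 < \<epsilon>\<close> \<open>0 < m\<close>
    by (simp add: P_def Z_def pred_error_eps_mid_big_eps_zero_big)
  ultimately have Z_ok: "real (n - 1) * \<epsilon> \<le> 1" and error: "pred_error P Z \<le> r"
    using total \<open>0 < m\<close> by linarith+
  have P_ok: "length P = 2 * n - 1 \<and> normalized_val P \<and> k_value 3 P"
    using total \<open>3 \<le> n\<close> \<open>0 < \<epsilon>\<close> \<open>0 < m\<close>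
    by (simp add: P_def normalized_eps_mid_big k_value_eps_mid_big)
  show ?thesis
  proof (cases "inj_on (\<lambda>t. alg P (take (Suc t) P)) {..<n - 1}")
    case True
    then have "\<not> a_EFX n a P (online_alloc alg P P)"
      unfolding P_def using assms mid big \<open>0 < \<epsilon>\<close> \<open>0 < m\<close>
      by (intro online_alloc_eps_mid_big_not_a_EFX)
    moreover have "pred_error P P \<le> r" using \<open>0 < r\<close> by (simp add: pred_error_self)
    ultimately show ?thesis using P_ok by blast
  next
    case False
    moreover have "inj_on (\<lambda>t. alg P (take (Suc t) Z)) {..<n - 1}
        \<longleftrightarrow> inj_on (\<lambda>t. alg P (take (Suc t) P)) {..<n - 1}"
      unfolding P_def Z_def
      by (rule inj_on_cong) (simp add: take_eps_zero_big_eq_take_eps_mid_big[of _ n \<epsilon> m])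
    ultimately have "\<not> inj_on (\<lambda>t. alg P (take (Suc t) Z)) {..<n - 1}" by simp
    then have "\<not> a_EFX n a Z (online_alloc alg P Z)"
      unfolding Z_def using alg \<open>0 < a\<close> \<open>0 < \<epsilon>\<close> Z_ok
      by (intro online_alloc_eps_zero_big_not_a_EFX)
    moreover have "length Z = 2 * n - 1 \<and> normalized_val Z \<and> k_value 3 Z"
      using \<open>3 \<le> n\<close> \<open>0 < \<epsilon>\<close> Z_ok by (simp add: Z_def normalized_eps_zero_big k_value_eps_zero_big)
    ultimately show ?thesis using P_ok error by blast
  qed
qed

theorem theorem4p9:
  fixes n :: nat and a \<eta> :: real
  assumes "n \<ge> 3" and "0 < a" and "a \<le> 1"
    and "\<eta> < 1 - min (1 / (2 * (real n - 1 + 2 * a))) ((1 - a\<^sup>2) / (4 + (2 * real n - 3) * a))"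
  shows "\<forall>alg :: real list \<Rightarrow> real list \<Rightarrow> nat. (\<forall>p h. alg p h < n) \<longrightarrow>
           (\<exists>p v. length p = 2 * n - 1 \<and> length v = 2 * n - 1 \<and>
                  normalized_val p \<and> normalized_val v \<and>
                  k_value 3 p \<and> k_value 3 v \<and>
                  pred_error p v \<le> 1 - \<eta> \<and>
                  \<not> a_EFX n a v (online_alloc alg p v))"
proof -
  have "0 \<le> 1 - a\<^sup>2" using assms(2,3) by (simp add: power_le_one)
  then have "0 \<le> min (1 / (2 * (real n - 1 + 2 * a))) ((1 - a\<^sup>2) / (4 + (2 * real n - 3) * a))"
    using assms(1,2) by simp
  then have "0 < 1 - \<eta>" using assms(4) by linarith
  then show ?thesis using online_a_EFX_impossible[OF assms(1-3)] by blast
qed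

end
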